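(* Fix $F$ and $c$. For $h_1\in(0,1)$ let $\underline h_2(h_1)\in(0,1)$ be defined by $F(h_1,1)=F(1,\underline h_2(h_1))$, and consider $\boldsymbol h=(h_1,h_2)$ with $h_1\in(0,1)$ and $h_2\in[\underline h_2(h_1),1)$ (equivalently, humans are stronger in dimension 2 than in dimension 1: $F(1,h_2)\ge F(h_1,1)$). For such $\boldsymbol h$ let $w^*_{\boldsymbol h}(\boldsymbol m)=\max\{\bar w_s,\bar w_b,\bar w_t\}$ denote labor income as a function of $\boldsymbol m\in[0,1]^2$. Then there exists $\bar h_1\in(0,1)$ such that: - If $h_1\ge\bar h_1$, then for every $h_2\in[\underline h_2(h_1),1)$, $\boldsymbol m=(1,0)$ maximizes $w^*_{\boldsymbol h}$ over $[0,1]^2$. - If $h_1<\bar h_1$, then there exists $\bar h_2(h_1)\in[\underline h_2(h_1),1)$ such that: if $h_2\in[\bar h_2(h_1),1)$ then $\boldsymbol m=(1,0)$ maximizes $w^*_{\boldsymbol h}$ over $[0,1]^2$; and if $h_2\in[\underline h_2(h_1),\bar h_2(h_1))$ then $\boldsymbol m=(1,1)$ maximizes $w^*_{\boldsymbol h}$ over $[0,1]^2$.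
   Context: $F$ is a cumulative distribution function on $[0,1]^2$ with a density $f$ that has full support on $[0,1]^2$, and $c\in(0,1)$. For $\boldsymbol x,\boldsymbol y\in[0,1]^2$ write $\boldsymbol x\vee\boldsymbol y=(\max\{x_1,y_1\},\max\{x_2,y_2\})$, and for $F(\boldsymbol x)<1$ let $n(\boldsymbol x)=\frac{1}{c(1-F(\boldsymbol x))}$. Given $\boldsymbol h\in(0,1)^2$ and $\boldsymbol m\in[0,1]^2$ define $\bar w_s=F(\boldsymbol h)$, $\bar w_b=n(\boldsymbol m)\big(F(\boldsymbol m\vee\boldsymbol h)-F(\boldsymbol m)\big)$ (with $\bar w_b:=0$ if $F(\boldsymbol m)=1$), $\bar w_t=F(\boldsymbol m\vee\boldsymbol h)-F(\boldsymbol m)/n(\boldsymbol h)$. In the model with abundant machines, $\max\{\bar w_s,\bar w_b,\bar w_t\}$ is the equilibrium wage (labor income) when humans have knowledge $\boldsymbol h$ and machines have knowledge $\boldsymbol m$. *)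

theory Defs
  imports "HOL-Analysis.Analysis"
begin

definition unit_sq :: "(real \<times> real) set" where
  "unit_sq = cbox (0,0) (1,1)"

definition is_density_with_full_support :: "(real \<times> real \<Rightarrow> real) \<Rightarrow> bool" where
  "is_density_with_full_support f \<longleftrightarrow>
     f integrable_on unit_sq \<and>
     (\<forall>x\<in>unit_sq. 0 \<le> f x) \<and>
     integral unit_sq f = 1 \<and>
     (\<forall>U. open U \<and> U \<inter> unit_sq \<noteq> {} \<longrightarrow> integral (U \<inter> unit_sq) f > 0)"

definition is_cdf_of :: "(real \<times> real \<Rightarrow> real) \<Rightarrow> (real \<times> real \<Rightarrow> real) \<Rightarrow> bool" where
  "is_cdf_of F f \<longleftrightarrow> (\<forall>x\<in>unit_sq. F x = integral (cbox (0,0) x) f)"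

definition vee :: "real \<times> real \<Rightarrow> real \<times> real \<Rightarrow> real \<times> real" where
  "vee x y = (max (fst x) (fst y), max (snd x) (snd y))"

definition nfun :: "(real \<times> real \<Rightarrow> real) \<Rightarrow> real \<Rightarrow> real \<times> real \<Rightarrow> real" where
  "nfun F c x = 1 / (c * (1 - F x))"

definition w_s :: "(real \<times> real \<Rightarrow> real) \<Rightarrow> real \<Rightarrow> real \<times> real \<Rightarrow> real \<times> real \<Rightarrow> real" where
  "w_s F c h m = F h"

definition w_b :: "(real \<times> real \<Rightarrow> real) \<Rightarrow> real \<Rightarrow> real \<times> real \<Rightarrow> real \<times> real \<Rightarrow> real" where
  "w_b F c h m = (if F m = 1 then 0 else nfun F c m * (F (vee m h) - F m))"

definition w_t :: "(real \<times> real \<Rightarrow> real) \<Rightarrow> real \<Rightarrow> real \<times> real \<Rightarrow> real \<times> real \<Rightarrow> real" where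
  "w_t F c h m = F (vee m h) - F m / nfun F c h"

definition wage :: "(real \<times> real \<Rightarrow> real) \<Rightarrow> real \<Rightarrow> real \<times> real \<Rightarrow> real \<times> real \<Rightarrow> real" where
  "wage F c h m = max (w_s F c h m) (max (w_b F c h m) (w_t F c h m))"

definition h2_low :: "(real \<times> real \<Rightarrow> real) \<Rightarrow> real \<Rightarrow> real" where
  "h2_low F h1 = (THE t. 0 < t \<and> t < 1 \<and> F (h1, 1) = F (1, t))"

definition maximizes_wage :: "(real \<times> real \<Rightarrow> real) \<Rightarrow> real \<Rightarrow> real \<times> real \<Rightarrow> real \<times> real \<Rightarrow> bool" where
  "maximizes_wage F c h m \<longleftrightarrow> m \<in> unit_sq \<and> (\<forall>m'\<in>unit_sq. wage F c h m' \<le> wage F c h m)"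

end

theory Submission
  imports Defs
begin

text \<open>When F(h1, 1) \<le> F(1, h2), every machine knowledge m yields a wage below one of the two
  corner wages. If m \<ge> h, the wage is at most 1 - c (1 - F h), the wage at m = (1, 1); otherwise
  F(m \<or> h) \<le> F(1, h2), which bounds all three terms by F(1, h2) / c, the wage at m = (1, 0).
  So the maximizer is decided by the sign of the gap F(1, h2) / c - 1 + c (1 - F(h1, h2)). In h2
  the gap is nondecreasing (F(1, \<cdot>) grows at least as fast as F(h1, \<cdot>) and 1/c \<ge> c),
  continuous, and positive at h2 = 1, which gives the threshold h2bar; and it is nonnegative on
  the whole region once F(h1, 1) \<ge> c / (1 + c), which defines h1bar.\<close>

lemma mem_cbox_origin:
  "y \<in> cbox (0::real, 0::real) x \<longleftrightarrow> 0 \<le> fst y \<and> fst y \<le> fst x \<and> 0 \<le> snd y \<and> snd y \<le> snd x"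
  by (cases x; cases y) (simp add: cbox_Pair_eq)

lemma unit_sq_iff: "x \<in> unit_sq \<longleftrightarrow> 0 \<le> fst x \<and> fst x \<le> 1 \<and> 0 \<le> snd x \<and> snd x \<le> 1"
  unfolding unit_sq_def by (cases x) (simp add: cbox_Pair_eq)

lemma negligible_fst_eq: "negligible {x::real \<times> real. fst x = a}"
proof -
  have "negligible {x::real \<times> real. x \<bullet> (1, 0) = a}"
    by (rule negligible_standard_hyperplane) (simp add: Basis_prod_def)
  then show ?thesis by (simp add: inner_prod_def)
qed

lemma negligible_snd_eq: "negligible {x::real \<times> real. snd x = a}"
proof -
  have "negligible {x::real \<times> real. x \<bullet> (0, 1) = a}"
    by (rule negligible_standard_hyperplane) (simp add: Basis_prod_def)
  then show ?thesis by (simp add: inner_prod_def)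
qed

lemma eventually_le_iff_of_tendsto:
  fixes v :: "'a \<Rightarrow> real"
  assumes "(v \<longlongrightarrow> a) F" "t \<noteq> a"
  shows "eventually (\<lambda>k. t \<le> v k \<longleftrightarrow> t \<le> a) F"
proof (cases "t < a")
  case True
  then show ?thesis using order_tendstoD(1)[OF assms(1) True] by (auto elim: eventually_mono)
next
  case False
  then have "a < t" using assms(2) by simp
  then show ?thesis using order_tendstoD(2)[OF assms(1) \<open>a < t\<close>] by (auto elim: eventually_mono)
qed

lemma sign_threshold_of_mono:
  fixes g :: "real \<Rightarrow> real"
  assumes "a < b" "continuous_on {a..b} g" "mono_on {a..b} g" "0 < g b"
  shows "\<exists>x. a \<le> x \<and> x < b \<and> (\<forall>t. x \<le> t \<and> t \<le> b \<longrightarrow> 0 \<le> g t)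
           \<and> (\<forall>t. a \<le> t \<and> t < x \<longrightarrow> g t \<le> 0)"
proof (cases "0 \<le> g a")
  case True
  have "0 \<le> g t" if "a \<le> t" "t \<le> b" for t
    using True mono_onD[OF assms(3), of a t] that by auto
  then show ?thesis using assms(1) by (intro exI[of _ a]) auto
next
  case False
  then obtain x where x: "a \<le> x" "x \<le> b" "g x = 0"
    using IVT'[of g a 0 b] assms by auto
  moreover have "x \<noteq> b" using x(3) assms(4) by auto
  ultimately have "x < b" by simp
  with x show ?thesis
    by (intro exI[of _ x]) (metis atLeastAtMost_iff mono_onD[OF assms(3)] order.trans less_imp_le)
qed

definition wage_gap :: "(real \<times> real \<Rightarrow> real) \<Rightarrow> real \<Rightarrow> real \<times> real \<Rightarrow> real" where
  "wage_gap F c h = wage F c h (1, 0) - wage F c h (1, 1)"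

locale monotone_square_cdf =
  fixes F :: "real \<times> real \<Rightarrow> real"
  assumes F_mono: "\<lbrakk>x \<in> unit_sq; y \<in> unit_sq; fst x \<le> fst y; snd x \<le> snd y\<rbrakk> \<Longrightarrow> F x \<le> F y"
    and F_bottom_edge: "\<lbrakk>0 \<le> a; a \<le> 1\<rbrakk> \<Longrightarrow> F (a, 0) = 0"
    and F_top_corner: "F (1, 1) = 1"
begin

lemma F_nonneg: "x \<in> unit_sq \<Longrightarrow> 0 \<le> F x"
  using F_mono[of "(0, 0)" x] F_bottom_edge[of 0] by (simp add: unit_sq_iff)

lemma F_le_1: "x \<in> unit_sq \<Longrightarrow> F x \<le> 1"
  using F_mono[of x "(1, 1)"] F_top_corner by (simp add: unit_sq_iff)

lemma wage_at_1_0: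
  assumes "0 < c" "c \<le> 1" "h \<in> unit_sq"
  shows "wage F c h (1, 0) = F (1, snd h) / c"
proof -
  have "F h \<le> F (1, snd h)" using F_mono[of h "(1, snd h)"] assms(3) by (simp add: unit_sq_iff)
  moreover have "F (1, snd h) \<le> F (1, snd h) / c"
    using assms F_nonneg[of "(1, snd h)"] by (simp add: unit_sq_iff le_divide_eq mult_left_le)
  ultimately show ?thesis using F_bottom_edge[of 1] assms(3)
    by (cases h) (simp add: wage_def w_s_def w_b_def w_t_def vee_def nfun_def unit_sq_iff)
qed

lemma F_le_wage_at_1_1:
  assumes "0 < c" "c \<le> 1" "h \<in> unit_sq"
  shows "F h \<le> 1 - c * (1 - F h)" "0 \<le> 1 - c * (1 - F h)"
proof -
  have "0 \<le> F h" "F h \<le> 1" using F_nonneg F_le_1 assms(3) by auto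
  then have "0 \<le> (1 - c) * (1 - F h)" "c * (1 - F h) \<le> 1"
    using assms(1,2) by (auto intro: mult_le_one)
  then show "F h \<le> 1 - c * (1 - F h)" "0 \<le> 1 - c * (1 - F h)" by (auto simp: algebra_simps)
qed

lemma wage_at_1_1:
  assumes "0 < c" "c \<le> 1" "h \<in> unit_sq"
  shows "wage F c h (1, 1) = 1 - c * (1 - F h)"
  using F_le_wage_at_1_1[OF assms] F_top_corner assms(3)
  by (cases h) (auto simp: wage_def w_s_def w_b_def w_t_def vee_def nfun_def unit_sq_iff max_def)

lemma wage_le_if_h_le_m:
  assumes "0 < c" "c \<le> 1" "h \<in> unit_sq" "m \<in> unit_sq" "fst h \<le> fst m" "snd h \<le> snd m"
  shows "wage F c h m \<le> 1 - c * (1 - F h)"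
proof -
  have "vee m h = m" using assms(5,6) by (cases m) (auto simp: vee_def)
  then have "w_b F c h m = 0" "w_t F c h m = F m * (1 - c * (1 - F h))"
    by (simp_all add: w_b_def w_t_def nfun_def algebra_simps)
  moreover have "F m * (1 - c * (1 - F h)) \<le> 1 - c * (1 - F h)"
    using F_le_wage_at_1_1[OF assms(1-3)] F_nonneg[OF assms(4)] F_le_1[OF assms(4)]
    by (intro mult_left_le_one_le) auto
  ultimately show ?thesis using F_le_wage_at_1_1[OF assms(1-3)]
    by (simp add: wage_def w_s_def)
qed

lemma wage_le_div_c:
  assumes "0 < c" "c \<le> 1" "h \<in> unit_sq" "m \<in> unit_sq"
    and "F h \<le> B" "F (vee m h) \<le> B" "B \<le> 1"
  shows "wage F c h m \<le> B / c"
proof -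
  have vee: "vee m h \<in> unit_sq" using assms(3,4) by (auto simp: unit_sq_iff vee_def)
  have Fm: "0 \<le> F m" "F m \<le> F (vee m h)"
    using F_nonneg[OF assms(4)] F_mono[OF assms(4) vee] by (auto simp: vee_def)
  have "0 \<le> B" using Fm assms(6) by linarith
  then have B: "B \<le> B / c" using assms(1,2) by (simp add: le_divide_eq mult_left_le)
  have "0 \<le> F m * (c * (1 - F h))" using Fm assms(1) F_le_1[OF assms(3)] by simp
  then have wt: "w_t F c h m \<le> B" using assms(6) by (simp add: w_t_def nfun_def)
  have wb: "w_b F c h m \<le> B / c"
  proof (cases "F m = 1")
    case False
    then have "F m < 1" using Fm assms(6,7) by linarith
    moreover have "F (vee m h) - F m \<le> B * (1 - F m)"
      using Fm assms(6,7) mult_left_le_one_le[of "F m" B] \<open>0 \<le> B\<close> by (simp add: algebra_simps)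
    ultimately have "(F (vee m h) - F m) / (1 - F m) \<le> B" by (simp add: pos_divide_le_eq)
    moreover have "w_b F c h m = (F (vee m h) - F m) / (1 - F m) / c"
      using False by (simp add: w_b_def nfun_def)
    ultimately show ?thesis using assms(1) by (simp only: divide_right_mono less_imp_le)
  qed (use \<open>0 \<le> B\<close> assms(1) in \<open>simp add: w_b_def\<close>)
  show ?thesis using B wt wb assms(5) by (simp add: wage_def w_s_def)
qed

lemma wage_le_corner_max:
  assumes c: "0 < c" "c \<le> 1" and h: "h \<in> unit_sq" and m: "m \<in> unit_sq"
    and dom: "F (fst h, 1) \<le> F (1, snd h)"
  shows "wage F c h m \<le> max (wage F c h (1, 0)) (wage F c h (1, 1))"
proof (cases "fst h \<le> fst m \<and> snd h \<le> snd m")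
  case True
  then show ?thesis using wage_le_if_h_le_m[OF c h m] wage_at_1_1[OF c h] by simp
next
  case not_dominated: False
  have "F (vee m h) \<le> F (1, snd h)"
  proof (cases "fst m < fst h")
    case True
    then have "F (vee m h) \<le> F (fst h, 1)"
      using h m by (intro F_mono) (auto simp: vee_def unit_sq_iff)
    with dom show ?thesis by simp
  next
    case False
    then have "snd m < snd h" using not_dominated by auto
    then show ?thesis using h m False by (intro F_mono) (auto simp: vee_def unit_sq_iff)
  qed
  moreover have "F h \<le> F (1, snd h)" using h by (intro F_mono) (auto simp: unit_sq_iff)
  ultimately have "wage F c h m \<le> F (1, snd h) / c"
    using h by (intro wage_le_div_c[OF c h m] F_le_1) (auto simp: unit_sq_iff)
  then show ?thesis using wage_at_1_0[OF c h] by simp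
qed

lemma maximizes_wage_by_gap:
  assumes "0 < c" "c \<le> 1" "h \<in> unit_sq" "F (fst h, 1) \<le> F (1, snd h)"
  shows "0 \<le> wage_gap F c h \<Longrightarrow> maximizes_wage F c h (1, 0)"
    and "wage_gap F c h \<le> 0 \<Longrightarrow> maximizes_wage F c h (1, 1)"
  using wage_le_corner_max[OF assms(1-3) _ assms(4)]
  by (fastforce simp: maximizes_wage_def wage_gap_def unit_sq_iff)+

lemma wage_gap_eq:
  assumes "0 < c" "c \<le> 1" "h \<in> unit_sq"
  shows "wage_gap F c h = F (1, snd h) / c - (1 - c * (1 - F h))"
  using wage_at_1_0[OF assms] wage_at_1_1[OF assms] by (simp add: wage_gap_def)

text \<open>With E = F(1, h2) \<ge> F h the gap is at least E (1/c - c) - (1 - c), which vanishes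
  exactly at E = c / (1 + c).\<close>
lemma wage_gap_nonneg:
  assumes c: "0 < c" "c \<le> 1" and h: "h \<in> unit_sq" and mass: "c / (1 + c) \<le> F (1, snd h)"
  shows "0 \<le> wage_gap F c h"
proof -
  define E where "E = F (1, snd h)"
  have "F h \<le> E" unfolding E_def using h by (intro F_mono) (auto simp: unit_sq_iff)
  have "c \<le> E * (1 + c)" using mass c by (simp add: E_def divide_le_eq algebra_simps)
  then have "c * (1 - c) \<le> E * (1 + c) * (1 - c)" using c by (intro mult_right_mono) auto
  then have "1 - c \<le> E * (1 - c * c) / c" using c by (simp add: le_divide_eq algebra_simps)
  also have "\<dots> = E / c - c * E" using c by (simp add: field_simps)
  also have "\<dots> \<le> E / c - c * F h" using \<open>F h \<le> E\<close> c by simp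
  finally show ?thesis using wage_gap_eq[OF c h] by (simp add: E_def algebra_simps)
qed

end

locale square_cdf_with_density =
  fixes F f :: "real \<times> real \<Rightarrow> real"
  assumes density: "is_density_with_full_support f" and cdf: "is_cdf_of F f"
begin

lemma f_integrable: "f integrable_on unit_sq"
  and f_nonneg: "x \<in> unit_sq \<Longrightarrow> 0 \<le> f x"
  and f_total: "integral unit_sq f = 1"
  and f_full_support: "\<lbrakk>open U; U \<inter> unit_sq \<noteq> {}\<rbrakk> \<Longrightarrow> 0 < integral (U \<inter> unit_sq) f"
  using density unfolding is_density_with_full_support_def by auto

definition density_below :: "real \<times> real \<Rightarrow> real \<times> real \<Rightarrow> real" where
  "density_below x y = (if y \<in> cbox (0, 0) x then f y else 0)"

lemma cbox_subset_unit_sq: "x \<in> unit_sq \<Longrightarrow> cbox (0, 0) x \<subseteq> unit_sq"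
  by (auto simp: unit_sq_iff mem_cbox_origin)

lemma integrable_density_below: "x \<in> unit_sq \<Longrightarrow> density_below x integrable_on unit_sq"
  unfolding density_below_def integrable_restrict_Int
  using cbox_subset_unit_sq[of x] integrable_on_subcbox[OF f_integrable, of 0 x]
  by (simp add: Int_absorb2 zero_prod_def)

lemma F_eq_integral_density_below: "x \<in> unit_sq \<Longrightarrow> F x = integral unit_sq (density_below x)"
  unfolding density_below_def integral_restrict_Int using cdf cbox_subset_unit_sq[of x]
  by (simp add: is_cdf_of_def Int_absorb2)

lemma F_left_edge: "\<lbrakk>0 \<le> b; b \<le> 1\<rbrakk> \<Longrightarrow> F (0, b) = 0"
  using cdf by (simp add: is_cdf_of_def unit_sq_iff content_eq_0 Basis_prod_def)

end

sublocale square_cdf_with_density \<subseteq> monotone_square_cdf F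
proof
  show "F x \<le> F y" if "x \<in> unit_sq" "y \<in> unit_sq" "fst x \<le> fst y" "snd x \<le> snd y" for x y
    unfolding F_eq_integral_density_below[OF that(1)] F_eq_integral_density_below[OF that(2)]
    using that by (intro integral_le integrable_density_below)
      (auto simp: density_below_def mem_cbox_origin f_nonneg)
  show "F (a, 0) = 0" if "0 \<le> a" "a \<le> 1" for a
    using cdf that by (simp add: is_cdf_of_def unit_sq_iff content_eq_0 Basis_prod_def)
  show "F (1, 1) = 1"
    using cdf f_total by (simp add: is_cdf_of_def unit_sq_def unit_sq_iff)
qed

context square_cdf_with_density
begin

lemma density_below_tendsto:
  assumes "u \<longlonglongrightarrow> a" "fst y \<noteq> fst a" "snd y \<noteq> snd a"
  shows "(\<lambda>k. density_below (u k) y) \<longlonglongrightarrow> density_below a y"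
proof -
  have "eventually (\<lambda>k. fst y \<le> fst (u k) \<longleftrightarrow> fst y \<le> fst a) sequentially"
    using assms(1,2) by (intro eventually_le_iff_of_tendsto tendsto_fst)
  moreover have "eventually (\<lambda>k. snd y \<le> snd (u k) \<longleftrightarrow> snd y \<le> snd a) sequentially"
    using assms(1,3) by (intro eventually_le_iff_of_tendsto tendsto_snd)
  ultimately have "eventually (\<lambda>k. density_below (u k) y = density_below a y) sequentially"
    by eventually_elim (simp add: density_below_def mem_cbox_origin)
  then show ?thesis by (rule tendsto_eventually)
qed

text \<open>Dominated convergence, after removing the two lines through the limit point, on which
  the indicators of the boxes need not converge.\<close>
lemma F_continuous: "continuous_on unit_sq F"
proof (rule continuous_on_sequentiallyI)
  fix u a assume u: "\<forall>n. u n \<in> unit_sq" and a: "a \<in> unit_sq" and lim: "u \<longlonglongrightarrow> a"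
  define N where "N = {y. fst y = fst a} \<union> {y. snd y = snd a}"
  have N: "negligible N" unfolding N_def by (intro negligible_Un negligible_fst_eq negligible_snd_eq)
  define g where "g k y = (if y \<in> N then 0 else density_below (u k) y)" for k y
  define G where "G y = (if y \<in> N then 0 else density_below a y)" for y
  have g_int: "g k integrable_on unit_sq" for k
    by (rule integrable_spike[OF integrable_density_below N]) (use u in \<open>auto simp: g_def\<close>)
  have g_le: "norm (g k y) \<le> f y" if "y \<in> unit_sq" for k y
    using that by (simp add: g_def density_below_def f_nonneg)
  have g_lim: "(\<lambda>k. g k y) \<longlonglongrightarrow> G y" for y
    using density_below_tendsto[OF lim] by (cases "y \<in> N") (auto simp: g_def G_def N_def)
  have "(\<lambda>k. integral unit_sq (g k)) \<longlonglongrightarrow> integral unit_sq G"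
    by (rule dominated_convergence(2)[OF g_int f_integrable g_le g_lim])
  moreover have "integral unit_sq (g k) = F (u k)" for k
    unfolding F_eq_integral_density_below[OF spec[OF u]]
    by (rule integral_spike[OF N]) (auto simp: g_def)
  moreover have "integral unit_sq G = F a"
    unfolding F_eq_integral_density_below[OF a] by (rule integral_spike[OF N]) (auto simp: G_def)
  ultimately show "(\<lambda>n. F (u n)) \<longlonglongrightarrow> F a" by simp
qed

lemma continuous_on_vertical_segment: "\<lbrakk>0 \<le> a; a \<le> 1\<rbrakk> \<Longrightarrow> continuous_on {0..1} (\<lambda>t. F (a, t))"
  by (rule continuous_on_compose2[OF F_continuous]) (auto intro!: continuous_intros simp: unit_sq_iff)

lemma continuous_on_top_edge: "continuous_on {0..1} (\<lambda>t. F (t, 1))"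
  by (rule continuous_on_compose2[OF F_continuous]) (auto intro!: continuous_intros simp: unit_sq_iff)

lemma F_less_of_open_gap:
  assumes x: "x \<in> unit_sq" and y: "y \<in> unit_sq" and le: "fst x \<le> fst y" "snd x \<le> snd y"
    and U: "open U" "U \<inter> unit_sq \<noteq> {}" "U \<inter> cbox (0, 0) x = {}" "U \<inter> unit_sq \<subseteq> cbox (0, 0) y"
  shows "F x < F y"
proof -
  define fU where "fU = (\<lambda>z. if z \<in> U then f z else 0)"
  have pos: "0 < integral (U \<inter> unit_sq) f" using f_full_support U(1,2) .
  then have "f integrable_on (U \<inter> unit_sq)" using not_integrable_integral by force
  then have fU_int: "fU integrable_on unit_sq" by (simp add: fU_def integrable_restrict_Int)
  have "F x + integral unit_sq fU = integral unit_sq (\<lambda>z. density_below x z + fU z)"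
    using integral_add[OF integrable_density_below[OF x] fU_int] F_eq_integral_density_below[OF x]
    by simp
  also have "\<dots> \<le> F y" unfolding F_eq_integral_density_below[OF y]
  proof (rule integral_le[OF integrable_add[OF integrable_density_below[OF x] fU_int]
        integrable_density_below[OF y]])
    fix z assume z: "z \<in> unit_sq"
    show "density_below x z + fU z \<le> density_below y z"
      using U(3,4) z f_nonneg[OF z] le by (auto simp: density_below_def fU_def mem_cbox_origin)
  qed
  finally show ?thesis using pos by (simp add: fU_def integral_restrict_Int)
qed

lemma F_top_edge_strict_mono: assumes "0 \<le> s" "s < t" "t \<le> 1" shows "F (s, 1) < F (t, 1)"
proof (rule F_less_of_open_gap[of _ _ "{z. s < fst z \<and> fst z < t}"])
  show "open {z::real \<times> real. s < fst z \<and> fst z < t}"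
    by (intro open_Collect_conj open_Collect_less continuous_intros)
  have "((s + t) / 2, 0) \<in> {z::real \<times> real. s < fst z \<and> fst z < t} \<inter> unit_sq"
    using assms by (auto simp: unit_sq_iff)
  then show "{z::real \<times> real. s < fst z \<and> fst z < t} \<inter> unit_sq \<noteq> {}" by blast
qed (use assms in \<open>auto simp: unit_sq_iff mem_cbox_origin\<close>)

lemma F_right_edge_strict_mono: assumes "0 \<le> s" "s < t" "t \<le> 1" shows "F (1, s) < F (1, t)"
proof (rule F_less_of_open_gap[of _ _ "{z. s < snd z \<and> snd z < t}"])
  show "open {z::real \<times> real. s < snd z \<and> snd z < t}"
    by (intro open_Collect_conj open_Collect_less continuous_intros)
  have "(0, (s + t) / 2) \<in> {z::real \<times> real. s < snd z \<and> snd z < t} \<inter> unit_sq"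
    using assms by (auto simp: unit_sq_iff)
  then show "{z::real \<times> real. s < snd z \<and> snd z < t} \<inter> unit_sq \<noteq> {}" by blast
qed (use assms in \<open>auto simp: unit_sq_iff mem_cbox_origin\<close>)

lemma F_increment_le_right_edge_increment:
  assumes "0 \<le> a" "a \<le> 1" "0 \<le> s" "s \<le> t" "t \<le> 1"
  shows "F (a, t) - F (a, s) \<le> F (1, t) - F (1, s)"
proof -
  have sq: "(a, s) \<in> unit_sq" "(a, t) \<in> unit_sq" "(1, s) \<in> unit_sq" "(1, t) \<in> unit_sq"
    using assms by (auto simp: unit_sq_iff)
  note int = integrable_density_below[OF sq(1)] integrable_density_below[OF sq(2)]
    integrable_density_below[OF sq(3)] integrable_density_below[OF sq(4)]
  have "integral unit_sq (\<lambda>z. density_below (a, t) z + density_below (1, s) z)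
      \<le> integral unit_sq (\<lambda>z. density_below (1, t) z + density_below (a, s) z)"
  proof (rule integral_le[OF integrable_add[OF int(2,3)] integrable_add[OF int(4,1)]])
    fix z assume z: "z \<in> unit_sq"
    show "density_below (a, t) z + density_below (1, s) z \<le> density_below (1, t) z + density_below (a, s) z"
      using z f_nonneg[OF z] assms by (auto simp: density_below_def mem_cbox_origin unit_sq_iff)
  qed
  then show ?thesis
    using integral_add[OF int(2,3)] integral_add[OF int(4,1)]
      F_eq_integral_density_below[OF sq(1)] F_eq_integral_density_below[OF sq(2)]
      F_eq_integral_density_below[OF sq(3)] F_eq_integral_density_below[OF sq(4)]
    by linarith
qed

lemma top_edge_attains:
  assumes "0 < y" "y < 1"
  shows "\<exists>t. 0 < t \<and> t < 1 \<and> F (t, 1) = y"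
proof -
  obtain t where t: "0 \<le> t" "t \<le> 1" "F (t, 1) = y"
    using IVT'[of "\<lambda>t. F (t, 1)" 0 y 1] continuous_on_top_edge F_left_edge[of 1] F_top_corner assms
    by auto
  moreover have "t \<noteq> 0" "t \<noteq> 1" using t(3) F_left_edge[of 1] F_top_corner assms by auto
  ultimately show ?thesis by (intro exI[of _ t]) auto
qed

lemma right_edge_attains:
  assumes "0 < y" "y < 1"
  shows "\<exists>t. 0 < t \<and> t < 1 \<and> F (1, t) = y"
proof -
  obtain t where t: "0 \<le> t" "t \<le> 1" "F (1, t) = y"
    using IVT'[of "\<lambda>t. F (1, t)" 0 y 1] continuous_on_vertical_segment[of 1] F_bottom_edge[of 1]
      F_top_corner assms
    by auto
  moreover have "t \<noteq> 0" "t \<noteq> 1" using t(3) F_bottom_edge[of 1] F_top_corner assms by auto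
  ultimately show ?thesis by (intro exI[of _ t]) auto
qed

lemma h2_low_spec:
  assumes "0 < h1" "h1 < 1"
  shows "0 < h2_low F h1" "h2_low F h1 < 1" "F (1, h2_low F h1) = F (h1, 1)"
proof -
  have "0 < F (h1, 1)" "F (h1, 1) < 1"
    using F_top_edge_strict_mono[of 0 h1] F_top_edge_strict_mono[of h1 1] F_left_edge[of 1]
      F_top_corner assms
    by auto
  then obtain t where t: "0 < t" "t < 1" "F (h1, 1) = F (1, t)"
    using right_edge_attains by metis
  have "t' = t" if "0 < t' \<and> t' < 1 \<and> F (h1, 1) = F (1, t')" for t'
    using F_right_edge_strict_mono[of t' t] F_right_edge_strict_mono[of t t'] that t
    by (cases t' t rule: linorder_cases) auto
  then have "h2_low F h1 = t"
    unfolding h2_low_def using t by (intro the_equality) auto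
  then show "0 < h2_low F h1" "h2_low F h1 < 1" "F (1, h2_low F h1) = F (h1, 1)" using t by auto
qed

lemma F_top_edge_le_right_edge:
  assumes "0 < h1" "h1 < 1" "h2_low F h1 \<le> h2" "h2 \<le> 1"
  shows "F (h1, 1) \<le> F (1, h2)"
  using F_mono[of "(1, h2_low F h1)" "(1, h2)"] h2_low_spec[OF assms(1,2)] assms(3,4)
  by (simp add: unit_sq_iff)

lemma mono_on_wage_gap:
  assumes "0 < c" "c \<le> 1" "0 \<le> h1" "h1 \<le> 1"
  shows "mono_on {0..1} (\<lambda>t. wage_gap F c (h1, t))"
proof (rule mono_onI)
  fix s t :: real assume st: "s \<in> {0..1}" "t \<in> {0..1}" "s \<le> t"
  define D where "D = F (1, t) - F (1, s)"
  have "0 \<le> D" using F_mono[of "(1, s)" "(1, t)"] st by (simp add: D_def unit_sq_iff)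
  have "c * (F (h1, t) - F (h1, s)) \<le> c * D"
    unfolding D_def using F_increment_le_right_edge_increment[of h1 s t] assms st by simp
  also have "\<dots> \<le> D" using \<open>0 \<le> D\<close> assms(1,2) by (simp add: mult_left_le_one_le)
  also have "\<dots> \<le> D / c" using \<open>0 \<le> D\<close> assms(1,2) by (simp add: le_divide_eq mult_left_le)
  finally have "0 \<le> D / c - c * (F (h1, t) - F (h1, s))" by simp
  also have "\<dots> = wage_gap F c (h1, t) - wage_gap F c (h1, s)"
    using wage_gap_eq[of c "(h1, s)"] wage_gap_eq[of c "(h1, t)"] assms st
    by (simp add: unit_sq_iff D_def diff_divide_distrib algebra_simps)
  finally show "wage_gap F c (h1, s) \<le> wage_gap F c (h1, t)" by simp
qed

lemma continuous_on_wage_gap: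
  assumes "0 < c" "c \<le> 1" "0 \<le> h1" "h1 \<le> 1"
  shows "continuous_on {0..1} (\<lambda>t. wage_gap F c (h1, t))"
proof -
  have "continuous_on {0..1} (\<lambda>t. F (1, t) / c - (1 - c * (1 - F (h1, t))))"
    using continuous_on_vertical_segment[of 1] continuous_on_vertical_segment[of h1] assms
    by (intro continuous_intros) auto
  then show ?thesis
    by (rule continuous_on_cong[THEN iffD1, rotated -1]) (use assms in \<open>auto simp: wage_gap_eq unit_sq_iff\<close>)
qed

lemma wage_gap_top_edge_pos:
  assumes "0 < c" "c < 1" "0 \<le> h1" "h1 \<le> 1"
  shows "0 < wage_gap F c (h1, 1)"
proof -
  have "0 \<le> c * (1 - F (h1, 1))" using F_le_1[of "(h1, 1)"] assms by (simp add: unit_sq_iff)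
  moreover have "1 < 1 / c" using assms by (simp add: field_simps)
  moreover have "wage_gap F c (h1, 1) = 1 / c - (1 - c * (1 - F (h1, 1)))"
    using wage_gap_eq[of c "(h1, 1)"] assms F_top_corner by (simp add: unit_sq_iff)
  ultimately show ?thesis by linarith
qed

lemma maximizes_wage_1_0_if_top_edge_mass:
  assumes "0 < c" "c \<le> 1" "0 < h1" "h1 < 1" "h2_low F h1 \<le> h2" "h2 < 1"
    and "c / (1 + c) \<le> F (h1, 1)"
  shows "maximizes_wage F c (h1, h2) (1, 0)"
proof -
  have h: "(h1, h2) \<in> unit_sq" using h2_low_spec[OF assms(3,4)] assms by (simp add: unit_sq_iff)
  have dom: "F (h1, 1) \<le> F (1, h2)" using F_top_edge_le_right_edge assms by simp
  then have "0 \<le> wage_gap F c (h1, h2)" using wage_gap_nonneg[OF assms(1,2) h] assms(7) by simp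
  then show ?thesis using maximizes_wage_by_gap(1)[OF assms(1,2) h] dom by simp
qed

lemma wage_maximizer_threshold:
  assumes c: "0 < c" "c < 1" and h1: "0 < h1" "h1 < 1"
  shows "\<exists>h2bar. h2_low F h1 \<le> h2bar \<and> h2bar < 1 \<and>
    (\<forall>h2. h2bar \<le> h2 \<and> h2 < 1 \<longrightarrow> maximizes_wage F c (h1, h2) (1, 0)) \<and>
    (\<forall>h2. h2_low F h1 \<le> h2 \<and> h2 < h2bar \<longrightarrow> maximizes_wage F c (h1, h2) (1, 1))"
proof -
  define L where "L = h2_low F h1"
  have L: "0 < L" "L < 1" using h2_low_spec[OF h1] by (auto simp: L_def)
  have cont: "continuous_on {L..1} (\<lambda>t. wage_gap F c (h1, t))"
    using continuous_on_wage_gap[of c h1] c h1 L by (auto intro: continuous_on_subset)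
  have mono: "mono_on {L..1} (\<lambda>t. wage_gap F c (h1, t))"
    using mono_on_wage_gap[of c h1] c h1 L by (auto intro: mono_on_subset)
  have pos: "0 < wage_gap F c (h1, 1)" using wage_gap_top_edge_pos[of c h1] c h1 by simp
  obtain x where x: "L \<le> x" "x < 1"
      "\<And>t. x \<le> t \<and> t \<le> 1 \<Longrightarrow> 0 \<le> wage_gap F c (h1, t)"
      "\<And>t. L \<le> t \<and> t < x \<Longrightarrow> wage_gap F c (h1, t) \<le> 0"
    using sign_threshold_of_mono[OF L(2) cont mono pos] by blast
  have in_range: "(h1, h2) \<in> unit_sq" "F (h1, 1) \<le> F (1, h2)" if "L \<le> h2" "h2 < 1" for h2
    using that L h1 F_top_edge_le_right_edge[OF h1, of h2] by (auto simp: unit_sq_iff L_def)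
  show ?thesis unfolding L_def[symmetric]
  proof (intro exI[of _ x] conjI allI impI)
    fix h2 assume "x \<le> h2 \<and> h2 < 1"
    then show "maximizes_wage F c (h1, h2) (1, 0)"
      using maximizes_wage_by_gap(1)[of c "(h1, h2)"] in_range[of h2] x c by simp
  next
    fix h2 assume "L \<le> h2 \<and> h2 < x"
    then show "maximizes_wage F c (h1, h2) (1, 1)"
      using maximizes_wage_by_gap(2)[of c "(h1, h2)"] in_range[of h2] x c by simp
  qed (use x in auto)
qed

end

theorem proposition4:
  fixes F f :: "real \<times> real \<Rightarrow> real" and c :: real
  assumes "is_density_with_full_support f"
    and "is_cdf_of F f"
    and "0 < c" and "c < 1"
  shows "\<exists>h1bar. 0 < h1bar \<and> h1bar < 1 \<and>
    (\<forall>h1 h2. h1bar \<le> h1 \<and> h1 < 1 \<and> h2_low F h1 \<le> h2 \<and> h2 < 1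
       \<longrightarrow> maximizes_wage F c (h1, h2) (1, 0)) \<and>
    (\<forall>h1. 0 < h1 \<and> h1 < h1bar \<longrightarrow>
       (\<exists>h2bar. h2_low F h1 \<le> h2bar \<and> h2bar < 1 \<and>
          (\<forall>h2. h2bar \<le> h2 \<and> h2 < 1 \<longrightarrow> maximizes_wage F c (h1, h2) (1, 0)) \<and>
          (\<forall>h2. h2_low F h1 \<le> h2 \<and> h2 < h2bar \<longrightarrow> maximizes_wage F c (h1, h2) (1, 1))))"
proof -
  interpret square_cdf_with_density F f using assms(1,2) by unfold_locales
  have "0 < c / (1 + c)" "c / (1 + c) < 1" using assms(3) by simp_all
  then obtain h1bar where h1bar: "0 < h1bar" "h1bar < 1" "F (h1bar, 1) = c / (1 + c)"
    using top_edge_attains by metis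
  have "maximizes_wage F c (h1, h2) (1, 0)"
    if "h1bar \<le> h1" "h1 < 1" "h2_low F h1 \<le> h2" "h2 < 1" for h1 h2
  proof (rule maximizes_wage_1_0_if_top_edge_mass)
    show "c / (1 + c) \<le> F (h1, 1)"
      using F_mono[of "(h1bar, 1)" "(h1, 1)"] h1bar that by (simp add: unit_sq_iff)
  qed (use assms(3,4) h1bar that in auto)
  with h1bar show ?thesis
    using wage_maximizer_threshold[OF assms(3,4)] by (blast intro: less_trans)
qed

end
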